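(* Let $S\subset \mathbb{R}^2$ be such that $S$ and $S^\mathsf{c}$ satisfy the $r$-rolling condition. Then for every $\alpha>0$, any open ball of radius $\alpha$ with center in $S$ contains an open ball of radius $\tfrac12 \min\{\alpha,r\}$ which is included in $S$.
   Context: A set $T\subset\mathbb{R}^2$ satisfies the $r$-rolling condition ($r>0$) if for every $x \in \partial T$ there is an open ball $B$ of radius $r$ with $B \cap T = \emptyset$ and $x \in \partial B$. $S^\mathsf{c}=\mathbb{R}^2\setminus S$. *)

theory Defs
  imports "HOL-Analysis.Analysis"
begin

definition rolling :: "real \<Rightarrow> (real^2) set \<Rightarrow> bool" where
  "rolling r T \<longleftrightarrow> (\<forall>x\<in>frontier T. \<exists>c. ball c r \<inter> T = {} \<and> x \<in> frontier (ball c r))"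

end

theory Submission
  imports Defs
begin

text \<open>Let \<open>\<rho> = min \<alpha> r / 2\<close>. If \<open>x\<close> is at distance at least \<open>\<rho>\<close> from the boundary,
  then \<open>B(x, \<rho>) \<subseteq> S\<close>. Otherwise let
  \<open>p\<close> be a nearest boundary point, at distance \<open>d < \<rho>\<close>. The two rolling balls at \<open>p\<close>, one
  inside \<open>S\<close> and one outside, are disjoint and both pass through \<open>p\<close>, so they are tangent
  there; the ball \<open>B(x, d) \<subseteq> S\<close> is tangent to the outer one at \<open>p\<close> as well. Hence \<open>x\<close>, \<open>p\<close> and
  both centres lie on one line, and the ball of radius \<open>\<rho>\<close> centred on that line at
  distance \<open>\<rho>\<close> from \<open>p\<close> towards the inner centre lies in the inner ball and within
  \<open>\<rho> - d\<close> of \<open>x\<close>.\<close>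

lemma ball_subset_if_frontier_dist_ge:
  fixes x :: "'a::real_normed_vector"
  assumes "x \<in> S" and "\<And>q. q \<in> frontier S \<Longrightarrow> e \<le> dist x q"
  shows "ball x e \<subseteq> S"
proof
  fix z assume z: "z \<in> ball x e"
  show "z \<in> S"
  proof (rule ccontr)
    assume "z \<notin> S"
    then have "closed_segment x z \<inter> frontier S \<noteq> {}"
      using assms(1) by (intro connected_Int_frontier) auto
    then obtain q where q: "q \<in> closed_segment x z" "q \<in> frontier S" by auto
    have "0 < e"
      using z by (metis mem_ball zero_le_dist le_less_trans)
    then have "closed_segment x z \<subseteq> ball x e"
      using z by (intro closed_segment_subset convex_ball) auto
    then show False using q assms(2)[of q] by auto
  qed
qed

lemma disjoint_balls_imp_dist_ge:
  fixes a b :: "'a::real_normed_vector"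
  assumes "ball a r \<inter> ball b s = {}" and "r > 0" and "s > 0"
  shows "r + s \<le> dist a b"
proof (rule ccontr)
  assume close: "\<not> r + s \<le> dist a b"
  define w where "w = r / (r + s)"
  define m where "m = a + w *\<^sub>R (b - a)"
  have "b - m = (1 - w) *\<^sub>R (b - a)"
    by (simp add: m_def algebra_simps)
  moreover have "1 - w = s / (r + s)"
    using assms(2,3) by (simp add: w_def field_simps)
  ultimately have "dist m b = s / (r + s) * dist a b"
    using assms(2,3) by (simp add: dist_norm norm_minus_commute)
  also have "\<dots> < s / (r + s) * (r + s)"
    using close assms(2,3) by (intro mult_strict_left_mono) auto
  finally have "m \<in> ball b s"
    using assms(2,3) by (simp add: dist_commute)
  have "dist a m = r / (r + s) * dist a b"
    using assms(2,3) by (simp add: m_def w_def dist_norm norm_minus_commute)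
  also have "\<dots> < r / (r + s) * (r + s)"
    using close assms(2,3) by (intro mult_strict_left_mono) auto
  finally have "m \<in> ball a r"
    using assms(2,3) by simp
  with \<open>m \<in> ball b s\<close> show False
    using assms(1) by blast
qed

lemma tangent_ball_centre_on_normal_ray:
  fixes a b p :: "'a::real_inner"
  assumes "ball a r \<inter> ball b s = {}" and "dist a p = r" and "dist p b = s"
    and "r > 0" and "s \<ge> 0"
  shows "b = p + (s / r) *\<^sub>R (p - a)"
proof (cases "s = 0")
  case True
  then show ?thesis using assms(3) by simp
next
  case False
  then have "r + s \<le> dist a b"
    using assms by (intro disjoint_balls_imp_dist_ge) auto
  then have "dist a b = dist a p + dist p b"
    using dist_triangle[of a b p] assms(2,3) by simp
  then have "norm (a - p) *\<^sub>R (p - b) = norm (p - b) *\<^sub>R (a - p)"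
    by (simp only: dist_triangle_eq)
  then have "r *\<^sub>R (p - b) = s *\<^sub>R (a - p)"
    using assms(2,3) by (simp add: dist_norm)
  then have "(1 / r) *\<^sub>R (r *\<^sub>R (p - b)) = (1 / r) *\<^sub>R (s *\<^sub>R (a - p))"
    by simp
  then have "p - b = (s / r) *\<^sub>R (a - p)"
    using assms(4) by simp
  then show ?thesis
    by (simp add: algebra_simps)
qed

lemma rolling_ball_at_frontier:
  assumes "rolling r T" and "r > 0" and "p \<in> frontier T"
  obtains c where "ball c r \<inter> T = {}" and "dist c p = r"
  using assms by (auto simp: rolling_def frontier_ball)

lemma dist_on_ray:
  fixes p v :: "'a::real_normed_vector"
  shows "dist (p + s *\<^sub>R v) (p + t *\<^sub>R v) = \<bar>s - t\<bar> * norm v"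
  by (simp add: dist_norm scaleR_diff_left[symmetric])

lemma rolling_ball_near_nearest_frontier_point:
  fixes S :: "(real^2) set"
  assumes "r > 0" and "rolling r S" and "rolling r (- S)"
    and "x \<in> S" and p: "p \<in> frontier S" and nearest: "\<And>q. q \<in> frontier S \<Longrightarrow> dist x p \<le> dist x q"
    and "dist x p < \<rho>" and "\<rho> \<le> r"
  obtains y where "ball y \<rho> \<subseteq> ball x (2 * \<rho>)" and "ball y \<rho> \<subseteq> S"
proof -
  define d where "d = dist x p"
  obtain c' where outer: "ball c' r \<inter> S = {}" and "dist c' p = r"
    using rolling_ball_at_frontier[OF assms(2,1) p] .
  obtain c where "ball c r \<inter> - S = {}" and "dist c p = r"
    using rolling_ball_at_frontier[OF assms(3,1)] p by (metis frontier_complement)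
  then have inner: "ball c r \<subseteq> S" by auto
  have "ball x d \<subseteq> S"
    using ball_subset_if_frontier_dist_ge[OF assms(4)] nearest by (auto simp: d_def)
  define v where "v = p - c'"
  have "norm v = r"
    using \<open>dist c' p = r\<close> by (simp add: v_def dist_norm norm_minus_commute)
  have "ball c' r \<inter> ball c r = {}"
    using inner outer by blast
  then have c: "c = p + (r / r) *\<^sub>R v"
    unfolding v_def by (rule tangent_ball_centre_on_normal_ray)
      (use \<open>dist c' p = r\<close> \<open>dist c p = r\<close> assms(1) in \<open>simp_all add: dist_commute\<close>)
  have "ball c' r \<inter> ball x d = {}"
    using \<open>ball x d \<subseteq> S\<close> outer by blast
  then have x: "x = p + (d / r) *\<^sub>R v"
    unfolding v_def by (rule tangent_ball_centre_on_normal_ray)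
      (use \<open>dist c' p = r\<close> assms(1) in \<open>simp_all add: d_def dist_commute\<close>)
  define y where "y = p + (\<rho> / r) *\<^sub>R v"
  have "dist y c = r - \<rho>"
    using dist_on_ray[of p "\<rho> / r" v "r / r"] \<open>norm v = r\<close> \<open>\<rho> \<le> r\<close> assms(1)
    by (simp add: y_def c abs_if field_simps)
  then have "ball y \<rho> \<subseteq> ball c r"
    by (simp add: ball_subset_ball_iff)
  with inner have "ball y \<rho> \<subseteq> S" by blast
  have "d < \<rho>"
    using \<open>dist x p < \<rho>\<close> by (simp add: d_def)
  then have "dist y x = \<rho> - d"
    using dist_on_ray[of p "\<rho> / r" v "d / r"] \<open>norm v = r\<close> assms(1)
    by (simp add: y_def x abs_if field_simps)
  then have "ball y \<rho> \<subseteq> ball x (2 * \<rho>)"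
    by (simp add: ball_subset_ball_iff d_def)
  then show thesis using \<open>ball y \<rho> \<subseteq> S\<close> by (rule that)
qed

theorem lemma1:
  fixes S :: "(real^2) set" and r :: real
  assumes "r > 0"
    and "rolling r S"
    and "rolling r (- S)"
  shows "\<forall>\<alpha>>0. \<forall>x\<in>S. \<exists>y. ball y (min \<alpha> r / 2) \<subseteq> ball x \<alpha> \<and> ball y (min \<alpha> r / 2) \<subseteq> S"
proof (intro allI impI ballI)
  fix \<alpha> :: real and x assume "\<alpha> > 0" and "x \<in> S"
  define \<rho> where "\<rho> = min \<alpha> r / 2"
  have "\<rho> \<le> r" and "ball x (2 * \<rho>) \<subseteq> ball x \<alpha>"
    using \<open>\<alpha> > 0\<close> assms(1) by (auto simp: \<rho>_def)
  show "\<exists>y. ball y \<rho> \<subseteq> ball x \<alpha> \<and> ball y \<rho> \<subseteq> S"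
  proof (cases "\<forall>q\<in>frontier S. \<rho> \<le> dist x q")
    case True
    then have "ball x \<rho> \<subseteq> S"
      using ball_subset_if_frontier_dist_ge[OF \<open>x \<in> S\<close>] by blast
    moreover have "ball x \<rho> \<subseteq> ball x \<alpha>"
      using \<open>\<alpha> > 0\<close> by (intro subset_ball) (auto simp: \<rho>_def)
    ultimately show ?thesis by blast
  next
    case False
    then obtain q where q: "q \<in> frontier S" and "dist x q < \<rho>" by auto
    then obtain p where p: "p \<in> frontier S"
      and nearest: "\<And>q. q \<in> frontier S \<Longrightarrow> dist x p \<le> dist x q"
      using distance_attains_inf[OF frontier_closed, of S x] by blast
    have "dist x p < \<rho>"
      using nearest[OF q] \<open>dist x q < \<rho>\<close> by linarith
    then obtain y where "ball y \<rho> \<subseteq> ball x (2 * \<rho>)" and "ball y \<rho> \<subseteq> S"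
      using rolling_ball_near_nearest_frontier_point[OF assms \<open>x \<in> S\<close> p nearest]
        \<open>\<rho> \<le> r\<close> by blast
    then show ?thesis using \<open>ball x (2 * \<rho>) \<subseteq> ball x \<alpha>\<close> by blast
  qed
qed

end
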